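(* Let $\chi\in\chi(G)$ be a character and $\lambda\in\Lambda^\chi$. There is a unique maximal subset $\mathcal M\subset[n]$ with respect to the property $L(\mathcal M)\subset S^\chi_\lambda$. Moreover $\mathcal M=\{i\in[n]:\langle\chi_i,\lambda\rangle\ge0\}$, and in particular $V([n]\setminus\mathcal M)=X_\lambda$.
   Context: $G$ diagonalizable over $\mathbf C$ acting on $X=\mathbf A^n_{\mathbf C}$ by $g\cdot x=(\chi_1(g)x_1,\dots,\chi_n(g)x_n)$. $\chi(G)$ characters, $\Gamma(G)$ one-parameter subgroups, pairing $\chi(\lambda(t))=t^{\langle\chi,\lambda\rangle}$ (extended to $\mathbf R$); fixed norm on $\Gamma(G)$ from an inner product on $\Gamma(G)_{\mathbf R}$ integral on $\Gamma(G)$. $[n]=\{1,\dots,n\}$. $X_\lambda=\{x:\lim_{t\to0}\lambda(t)x\text{ exists}\}=\{x:x_i=0\text{ whenever }\langle\chi_i,\lambda\rangle<0\}$. $x$ is $\chi$-unstable if some $\lambda$ with existing limit has $\langle\chi,\lambda\rangle<0$; for unstable $x$, $\lambda_{\chi,x}$ is the unique indivisible one-parameter subgroup with existing limit minimizing $\langle\chi,\lambda\rangle/\|\lambda\|$ among nonzero such. $\Lambda^\chi=\{\lambda_{\chi,x}:x\text{ unstable}\}$, $S^\chi_\lambda=\{x\text{ unstable}:\lambda_{\chi,x}=\lambda\}$. For $S\subset[n]$: $V(S)=\{x:x_i=0\ \forall i\in S\}$, $L(S)=\{x:x_i\ne0\iff i\in S\}$. *)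

theory Defs
  imports Complex_Main
begin

text \<open>Model of the torus data of a diagonalizable group G of rank r.
  One-parameter subgroups Gamma(G) = Z^r, represented as functions nat => int
  vanishing outside {0..<r}. A character chi is represented by its image in
  Hom(Gamma(G), Z) = Z^r (the torsion part of chi(G) pairs trivially), so the
  pairing is the dot product. The norm comes from an integer symmetric positive
  definite Gram matrix B. Points of A^n are x :: nat => complex, coordinates 1..n.\<close>

definition Gam :: "nat \<Rightarrow> (nat \<Rightarrow> int) set" where
  "Gam r = {l. \<forall>j\<ge>r. l j = 0}"

definition pair :: "nat \<Rightarrow> (nat \<Rightarrow> int) \<Rightarrow> (nat \<Rightarrow> int) \<Rightarrow> int" where
  "pair r a l = (\<Sum>j<r. a j * l j)"

definition nrm :: "nat \<Rightarrow> (nat \<Rightarrow> nat \<Rightarrow> int) \<Rightarrow> (nat \<Rightarrow> int) \<Rightarrow> real" where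
  "nrm r B l = sqrt (\<Sum>j<r. \<Sum>k<r. real_of_int (B j k * l j * l k))"

text \<open>X_lambda = points whose limit under lambda(t) as t -> 0 exists.\<close>
definition Xl :: "nat \<Rightarrow> nat \<Rightarrow> (nat \<Rightarrow> nat \<Rightarrow> int) \<Rightarrow> (nat \<Rightarrow> int) \<Rightarrow> (nat \<Rightarrow> complex) set" where
  "Xl n r chis l = {x. \<forall>i\<in>{1..n}. pair r (chis i) l < 0 \<longrightarrow> x i = 0}"

definition indivisible :: "nat \<Rightarrow> (nat \<Rightarrow> int) \<Rightarrow> bool" where
  "indivisible r l \<longleftrightarrow> l \<in> Gam r \<and> l \<noteq> (\<lambda>_. 0) \<and>
     \<not> (\<exists>k::int. k \<ge> 2 \<and> (\<exists>m\<in>Gam r. l = (\<lambda>j. k * m j)))"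

definition unstable :: "nat \<Rightarrow> nat \<Rightarrow> (nat \<Rightarrow> nat \<Rightarrow> int) \<Rightarrow> (nat \<Rightarrow> int) \<Rightarrow> (nat \<Rightarrow> complex) \<Rightarrow> bool" where
  "unstable n r chis chi x \<longleftrightarrow> (\<exists>l\<in>Gam r. x \<in> Xl n r chis l \<and> pair r chi l < 0)"

definition lam_chi :: "nat \<Rightarrow> nat \<Rightarrow> (nat \<Rightarrow> nat \<Rightarrow> int) \<Rightarrow> (nat \<Rightarrow> nat \<Rightarrow> int) \<Rightarrow> (nat \<Rightarrow> int)
     \<Rightarrow> (nat \<Rightarrow> complex) \<Rightarrow> (nat \<Rightarrow> int)" where
  "lam_chi n r B chis chi x = (THE l. indivisible r l \<and> x \<in> Xl n r chis l \<and>
     (\<forall>m\<in>Gam r. m \<noteq> (\<lambda>_. 0) \<and> x \<in> Xl n r chis m \<longrightarrow>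
        real_of_int (pair r chi l) / nrm r B l \<le> real_of_int (pair r chi m) / nrm r B m))"

definition LamChi :: "nat \<Rightarrow> nat \<Rightarrow> (nat \<Rightarrow> nat \<Rightarrow> int) \<Rightarrow> (nat \<Rightarrow> nat \<Rightarrow> int) \<Rightarrow> (nat \<Rightarrow> int)
     \<Rightarrow> (nat \<Rightarrow> int) set" where
  "LamChi n r B chis chi = lam_chi n r B chis chi ` {x. unstable n r chis chi x}"

definition S_chi :: "nat \<Rightarrow> nat \<Rightarrow> (nat \<Rightarrow> nat \<Rightarrow> int) \<Rightarrow> (nat \<Rightarrow> nat \<Rightarrow> int) \<Rightarrow> (nat \<Rightarrow> int)
     \<Rightarrow> (nat \<Rightarrow> int) \<Rightarrow> (nat \<Rightarrow> complex) set" where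
  "S_chi n r B chis chi l = {x. unstable n r chis chi x \<and> lam_chi n r B chis chi x = l}"

definition Vset :: "nat set \<Rightarrow> (nat \<Rightarrow> complex) set" where
  "Vset S = {x. \<forall>i\<in>S. x i = 0}"

definition Lset :: "nat \<Rightarrow> nat set \<Rightarrow> (nat \<Rightarrow> complex) set" where
  "Lset n S = {x. \<forall>i\<in>{1..n}. x i \<noteq> 0 \<longleftrightarrow> i \<in> S}"

end

theory Submission
  imports Defs
begin

text \<open>
  The theorem rests on Kempf's theorem: for every unstable point \<open>x\<close> there is exactly one
  indivisible optimal one-parameter subgroup.  The constraints on \<open>\<lambda>\<close> imposed by \<open>x\<close>
  (existence of the limit) only depend on the support of \<open>x\<close>, and enlarging the support
  shrinks the feasible cone.  If \<open>\<lambda> = \<lambda>\<^sub>\<chi>\<^sub>,\<^sub>x\<^sub>0\<close>, then every point with support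
  \<open>M = {i. \<langle>\<chi>\<^sub>i,\<lambda>\<rangle> \<ge> 0}\<close> still admits \<open>\<lambda>\<close>, has a feasible cone contained in that of
  \<open>x\<^sub>0\<close>, and so has the same optimal subgroup.  Conversely a point of \<open>S\<^sup>\<chi>\<^sub>\<lambda>\<close> lies in
  \<open>X\<^sub>\<lambda>\<close>, which forces its support into \<open>M\<close>; so \<open>M\<close> is even the greatest admissible support.

  Existence: for a face \<open>A\<close> of the cone,
  the \<open>B\<close>-orthogonal projection of \<open>-\<chi>\<close> onto the annihilator of \<open>A\<close> minimises the slope
  \<open>\<langle>\<chi>,v\<rangle>/\<parallel>v\<parallel>\<close> on that annihilator; moving a feasible point towards it does not increase
  the slope and, if the projection is infeasible, reaches a smaller face.  Hence the
  optimum is attained at one of finitely many projections, which are rational, and a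
  rational direction is a positive multiple of an indivisible integral one.  Uniqueness:
  the sum of two optimal subgroups is feasible, so the triangle inequality for the norm
  is an equality, which forces the two to be parallel.
\<close>

section \<open>The positive definite form\<close>

definition rat_vec :: "(nat \<Rightarrow> real) \<Rightarrow> bool" where
  "rat_vec v \<longleftrightarrow> (\<forall>j. v j \<in> \<rat>)"

definition coord_space :: "nat \<Rightarrow> (nat \<Rightarrow> real) set" where
  "coord_space k = {v. \<forall>j\<ge>k. v j = 0}"

definition real_vec :: "(nat \<Rightarrow> int) \<Rightarrow> nat \<Rightarrow> real" where
  "real_vec m = (\<lambda>j. real_of_int (m j))"

lemma Gam_iff_real_vec: "m \<in> Gam r \<longleftrightarrow> real_vec m \<in> coord_space r"
  by (simp add: Gam_def coord_space_def real_vec_def)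

lemma real_vec_nonzero: "m \<in> Gam r \<Longrightarrow> m \<noteq> (\<lambda>_. 0) \<Longrightarrow> \<exists>j<r. real_vec m j \<noteq> 0"
  by (auto simp: Gam_def real_vec_def) (metis not_le)

lemma first_zero_crossing:
  fixes x y :: "'a \<Rightarrow> real"
  assumes "finite T" "T \<noteq> {}" "\<forall>a\<in>T. 0 < x a \<and> y a < 0"
  obtains t a0 where "0 < t" "t < 1" "a0 \<in> T" "(1 - t) * x a0 + t * y a0 = 0"
    "\<forall>a\<in>T. 0 \<le> (1 - t) * x a + t * y a"
proof -
  define ratio where "ratio a = x a / (x a - y a)" for a
  have "Min (ratio ` T) \<in> ratio ` T" using assms(1,2) by (intro Min_in) auto
  then obtain a0 where a0: "a0 \<in> T" "ratio a0 = Min (ratio ` T)" by (metis imageE)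
  define t where "t = ratio a0"
  have "0 < x a0" "y a0 < 0" using assms(3) a0(1) by auto
  then have "0 < t" "t < 1" by (simp_all add: t_def ratio_def divide_less_eq)
  have "(1 - t) * x a0 + t * y a0 = x a0 - t * (x a0 - y a0)" by (simp add: algebra_simps)
  also have "\<dots> = 0" using \<open>0 < x a0\<close> \<open>y a0 < 0\<close> by (simp add: t_def ratio_def)
  finally have "(1 - t) * x a0 + t * y a0 = 0" .
  moreover have "0 \<le> (1 - t) * x a + t * y a" if "a \<in> T" for a
  proof -
    have "t \<le> ratio a" unfolding t_def a0(2) using assms(1) that by (intro Min_le) auto
    then have "t \<le> x a / (x a - y a)" by (simp add: ratio_def)
    moreover have "0 < x a - y a" using that assms(3) by auto
    ultimately have "t * (x a - y a) \<le> x a" by (simp add: pos_le_divide_eq)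
    then show ?thesis by (simp add: algebra_simps)
  qed
  ultimately show ?thesis using that \<open>0 < t\<close> \<open>t < 1\<close> a0(1) by blast
qed

locale pos_def_form =
  fixes r :: nat and B :: "nat \<Rightarrow> nat \<Rightarrow> int"
  assumes B_sym: "\<And>j k. B j k = B k j"
    and B_pos_def: "\<And>v::nat \<Rightarrow> real. (\<exists>j<r. v j \<noteq> 0) \<Longrightarrow>
                 (\<Sum>j<r. \<Sum>k<r. real_of_int (B j k) * v j * v k) > 0"
begin

definition bform :: "(nat \<Rightarrow> real) \<Rightarrow> (nat \<Rightarrow> real) \<Rightarrow> real" where
  "bform u v = (\<Sum>j<r. \<Sum>k<r. real_of_int (B j k) * u j * v k)"

definition bnorm :: "(nat \<Rightarrow> real) \<Rightarrow> real" where
  "bnorm v = sqrt (bform v v)"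

definition dot :: "(nat \<Rightarrow> real) \<Rightarrow> (nat \<Rightarrow> real) \<Rightarrow> real" where
  "dot a v = (\<Sum>j<r. a j * v j)"

lemma bform_add_left: "bform (\<lambda>j. u j + v j) w = bform u w + bform v w"
  by (simp add: bform_def algebra_simps sum.distrib)

lemma bform_diff_left: "bform (\<lambda>j. u j - v j) w = bform u w - bform v w"
  by (simp add: bform_def algebra_simps sum_subtractf)

lemma bform_scale_left: "bform (\<lambda>j. c * u j) w = c * bform u w"
  by (simp add: bform_def sum_distrib_left algebra_simps)

lemma bform_minus_left: "bform (\<lambda>j. - u j) w = - bform u w"
  using bform_scale_left[of "-1" u w] by simp

lemma bform_commute: "bform u v = bform v u"
  unfolding bform_def by (subst sum.swap) (simp add: B_sym mult_ac)

lemma bform_add_right: "bform w (\<lambda>j. u j + v j) = bform w u + bform w v"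
  by (simp add: bform_def algebra_simps sum.distrib)

lemma bform_diff_right: "bform w (\<lambda>j. u j - v j) = bform w u - bform w v"
  by (simp add: bform_def algebra_simps sum_subtractf)

lemma bform_scale_right: "bform w (\<lambda>j. c * u j) = c * bform w u"
  by (simp add: bform_def sum_distrib_left algebra_simps)

lemma bform_zero_left: "\<forall>j<r. v j = 0 \<Longrightarrow> bform v w = 0"
  by (simp add: bform_def)

lemma bform_zero_right: "\<forall>j<r. v j = 0 \<Longrightarrow> bform w v = 0"
  by (simp add: bform_def)

lemma bform_self_pos: "\<exists>j<r. v j \<noteq> 0 \<Longrightarrow> bform v v > 0"
  using B_pos_def unfolding bform_def by blast

lemma bform_self_nonneg: "bform v v \<ge> 0"
  by (cases "\<exists>j<r. v j \<noteq> 0") (auto simp: bform_self_pos less_imp_le bform_zero_left)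

lemma bform_self_eq_0D: "bform v v = 0 \<Longrightarrow> \<forall>j<r. v j = 0"
  using bform_self_pos by fastforce

lemma bform_expand: "bform (\<lambda>j. a * u j + b * v j) (\<lambda>j. a * u j + b * v j)
   = a\<^sup>2 * bform u u + 2 * a * b * bform u v + b\<^sup>2 * bform v v"
  by (simp add: bform_add_left bform_add_right bform_scale_left bform_scale_right
      bform_commute[of v u] power2_eq_square algebra_simps)

lemma dot_add: "dot a (\<lambda>j. u j + v j) = dot a u + dot a v"
  by (simp add: dot_def algebra_simps sum.distrib)

lemma dot_diff: "dot a (\<lambda>j. u j - v j) = dot a u - dot a v"
  by (simp add: dot_def algebra_simps sum_subtractf)

lemma dot_scale: "dot a (\<lambda>j. c * u j) = c * dot a u"
  by (simp add: dot_def sum_distrib_left algebra_simps)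

lemma dot_minus: "dot a (\<lambda>j. - u j) = - dot a u"
  using dot_scale[of a "-1" u] by simp

lemma dot_nonzeroD: "dot a v \<noteq> 0 \<Longrightarrow> \<exists>j<r. v j \<noteq> 0"
  by (auto simp: dot_def intro: ccontr)

lemma bform_Rats: "rat_vec u \<Longrightarrow> rat_vec v \<Longrightarrow> bform u v \<in> \<rat>"
  unfolding bform_def rat_vec_def by (intro Rats_sum Rats_mult) auto

lemma dot_Rats: "rat_vec u \<Longrightarrow> rat_vec v \<Longrightarrow> dot u v \<in> \<rat>"
  unfolding dot_def rat_vec_def by (intro Rats_sum Rats_mult) auto

lemma bnorm_sq: "(bnorm v)\<^sup>2 = bform v v"
  by (simp add: bnorm_def bform_self_nonneg)

lemma bnorm_nonneg: "bnorm v \<ge> 0"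
  by (simp add: bnorm_def bform_self_nonneg)

lemma bnorm_pos: "\<exists>j<r. v j \<noteq> 0 \<Longrightarrow> bnorm v > 0"
  by (simp add: bnorm_def bform_self_pos)

lemma bnorm_pos_if_dot_neg: "dot a v < 0 \<Longrightarrow> bnorm v > 0"
  by (rule bnorm_pos, rule dot_nonzeroD[of a]) simp

lemma bnorm_scale: "c \<ge> 0 \<Longrightarrow> bnorm (\<lambda>j. c * v j) = c * bnorm v"
  by (simp add: bnorm_def bform_scale_left bform_scale_right real_sqrt_mult
      mult.assoc[symmetric] power2_eq_square[symmetric])

lemma bform_cauchy_schwarz: "bform u v \<le> bnorm u * bnorm v"
proof (cases "\<exists>j<r. v j \<noteq> 0")
  case False
  then show ?thesis using bnorm_nonneg by (simp add: bform_zero_right)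
next
  case True
  then have pv: "bform v v > 0" by (rule bform_self_pos)
  define t where "t = bform u v / bform v v"
  have "0 \<le> bform (\<lambda>j. 1 * u j + (-t) * v j) (\<lambda>j. 1 * u j + (-t) * v j)"
    by (rule bform_self_nonneg)
  also have "\<dots> = bform u u - (bform u v)\<^sup>2 / bform v v"
    using pv by (subst bform_expand) (simp add: t_def power2_eq_square field_simps)
  finally have "(bform u v)\<^sup>2 \<le> bform u u * bform v v"
    using pv by (simp add: field_simps)
  then have "sqrt ((bform u v)\<^sup>2) \<le> sqrt (bform u u * bform v v)"
    by (rule real_sqrt_le_mono)
  then show ?thesis by (simp add: bnorm_def real_sqrt_mult)
qed

lemma bnorm_triangle: "bnorm (\<lambda>j. u j + v j) \<le> bnorm u + bnorm v"
proof -
  have "bform (\<lambda>j. u j + v j) (\<lambda>j. u j + v j) = bform u u + 2 * bform u v + bform v v"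
    using bform_expand[of 1 u 1 v] by simp
  also have "\<dots> \<le> (bnorm u + bnorm v)\<^sup>2"
    using bform_cauchy_schwarz[of u v] by (simp add: bnorm_sq[symmetric] power2_eq_square algebra_simps)
  finally show ?thesis
    using bnorm_nonneg[of u] bnorm_nonneg[of v] real_sqrt_le_mono
    by (fastforce simp: bnorm_def[of "\<lambda>j. u j + v j"])
qed

lemma bnorm_convex_comb:
  "0 \<le> t \<Longrightarrow> t \<le> 1 \<Longrightarrow> bnorm (\<lambda>j. (1 - t) * u j + t * v j) \<le> (1 - t) * bnorm u + t * bnorm v"
  using bnorm_triangle[of "\<lambda>j. (1 - t) * u j" "\<lambda>j. t * v j"] bnorm_scale[of "1 - t" u]
    bnorm_scale[of t v] by simp

lemma bnorm_triangle_eq_parallel: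
  assumes "bnorm (\<lambda>j. u j + v j) = bnorm u + bnorm v"
  shows "\<forall>j<r. bnorm v * u j = bnorm u * v j"
proof -
  have "(bnorm u + bnorm v)\<^sup>2 = bform u u + 2 * bform u v + bform v v"
    using bform_expand[of 1 u 1 v] assms bnorm_sq[of "\<lambda>j. u j + v j"] by simp
  then have uv: "bform u v = bnorm u * bnorm v"
    by (simp add: bnorm_sq[symmetric] power2_eq_square algebra_simps)
  have "bform (\<lambda>j. bnorm v * u j + (- bnorm u) * v j) (\<lambda>j. bnorm v * u j + (- bnorm u) * v j) = 0"
    by (subst bform_expand) (simp add: uv bnorm_sq[symmetric] power2_eq_square)
  then show ?thesis by (auto dest: bform_self_eq_0D)
qed

section \<open>Rational representers of linear forms\<close>

definition annihilator :: "(nat \<Rightarrow> real) set \<Rightarrow> (nat \<Rightarrow> real) set" where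
  "annihilator A = {v \<in> coord_space r. \<forall>a\<in>A. dot a v = 0}"

lemma representer_extend:
  assumes "k < r" and u0: "rat_vec u0" "u0 \<in> coord_space k" "\<forall>w\<in>coord_space k. bform u0 w = dot c w"
    and b: "rat_vec b" "b \<in> coord_space (Suc k)" "b k = 1" "\<forall>w\<in>coord_space k. bform b w = 0"
    and "rat_vec c"
  shows "\<exists>u. rat_vec u \<and> u \<in> coord_space (Suc k) \<and> (\<forall>w\<in>coord_space (Suc k). bform u w = dot c w)"
proof -
  have bpos: "bform b b > 0" using b(3) \<open>k < r\<close> by (intro bform_self_pos) auto
  define u where "u = (\<lambda>j. u0 j + dot c b / bform b b * b j)"
  have "bform u w = dot c w" if w: "w \<in> coord_space (Suc k)" for w
  proof -
    define w' where "w' = (\<lambda>j. w j - w k * b j)"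
    have w': "w' \<in> coord_space k"
      unfolding coord_space_def w'_def
    proof (intro CollectI allI impI)
      fix j assume "k \<le> j"
      then show "w j - w k * b j = 0"
        using w b(2,3) by (cases "j = k") (auto simp: coord_space_def)
    qed
    have w_split: "w = (\<lambda>j. w' j + w k * b j)" by (simp add: w'_def)
    have "bform u0 b = 0" using b(4) u0(2) by (metis bform_commute)
    then have "bform u0 w = dot c w'"
      using u0(3) w' by (subst w_split) (simp add: bform_add_right bform_scale_right)
    moreover have "bform b w = w k * bform b b"
      using b(4) w' by (subst w_split) (simp add: bform_add_right bform_scale_right)
    moreover have "dot c w = dot c w' + w k * dot c b"
      by (subst w_split) (simp add: dot_add dot_scale)
    ultimately show ?thesis
      using bpos unfolding u_def bform_add_left bform_scale_left by simp
  qed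
  moreover have "rat_vec u" using u0(1) b(1) \<open>rat_vec c\<close>
    by (auto simp: u_def rat_vec_def intro!: Rats_add Rats_mult Rats_divide dot_Rats bform_Rats)
  moreover have "u \<in> coord_space (Suc k)"
    using u0(2) b(2) by (simp add: u_def coord_space_def)
  ultimately show ?thesis by blast
qed

text \<open>Gram--Schmidt along the coordinates: the next basis vector \<open>e\<^sub>k\<close>, corrected by the
  representer of \<open>B k\<close> on the first \<open>k\<close> coordinates, is \<open>B\<close>-orthogonal to them.\<close>

lemma rat_representer_coord_space:
  "k \<le> r \<Longrightarrow> rat_vec c \<Longrightarrow>
   \<exists>u. rat_vec u \<and> u \<in> coord_space k \<and> (\<forall>w\<in>coord_space k. bform u w = dot c w)"
proof (induction k arbitrary: c)
  case 0
  show ?case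
    by (rule exI[of _ "\<lambda>_. 0"]) (auto simp: rat_vec_def coord_space_def bform_def dot_def)
next
  case (Suc k)
  then have "k < r" by simp
  define e where "e = (\<lambda>j. if j = k then (1::real) else 0)"
  define d where "d = (\<lambda>i. real_of_int (B k i))"
  have e_repr: "bform e w = dot d w" for w
  proof -
    have "bform e w = (\<Sum>j<r. if j = k then (\<Sum>i<r. real_of_int (B k i) * w i) else 0)"
      unfolding bform_def e_def by (intro sum.cong) auto
    then show ?thesis using \<open>k < r\<close> by (simp add: dot_def d_def)
  qed
  have "rat_vec d" by (simp add: rat_vec_def d_def)
  with Suc.IH \<open>k < r\<close> obtain q where q: "rat_vec q" "q \<in> coord_space k"
    "\<forall>w\<in>coord_space k. bform q w = dot d w" by auto
  from Suc.IH Suc.prems(2) \<open>k < r\<close> obtain u0 where u0: "rat_vec u0" "u0 \<in> coord_space k"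
    "\<forall>w\<in>coord_space k. bform u0 w = dot c w" by auto
  define b where "b = (\<lambda>j. e j - q j)"
  have "rat_vec b" using q(1) by (auto simp: rat_vec_def b_def e_def)
  moreover have "b \<in> coord_space (Suc k)" "b k = 1"
    using q(2) by (auto simp: coord_space_def b_def e_def)
  moreover have "\<forall>w\<in>coord_space k. bform b w = 0"
    using q(3) by (simp add: b_def bform_diff_left e_repr)
  ultimately show ?case
    using representer_extend[OF \<open>k < r\<close> u0] Suc.prems(2) by blast
qed

lemma rat_representer_annihilator:
  "finite A \<Longrightarrow> \<forall>a\<in>A. rat_vec a \<Longrightarrow> rat_vec c \<Longrightarrow>
   \<exists>u. rat_vec u \<and> u \<in> annihilator A \<and> (\<forall>w\<in>annihilator A. bform u w = dot c w)"
proof (induction A arbitrary: c rule: finite_induct)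
  case empty
  then show ?case using rat_representer_coord_space[of r c] by (simp add: annihilator_def)
next
  case (insert a A)
  from insert.IH[of a] insert.prems obtain ua where ua: "rat_vec ua" "ua \<in> annihilator A"
    "\<forall>w\<in>annihilator A. bform ua w = dot a w" by auto
  from insert.IH[of c] insert.prems obtain uc where uc: "rat_vec uc" "uc \<in> annihilator A"
    "\<forall>w\<in>annihilator A. bform uc w = dot c w" by auto
  have ann_insert: "annihilator (insert a A) = {w \<in> annihilator A. bform ua w = 0}"
    using ua(3) by (auto simp: annihilator_def)
  show ?case
  proof (cases "\<exists>j<r. ua j \<noteq> 0")
    case False
    then have "annihilator (insert a A) = annihilator A"
      unfolding ann_insert by (auto simp: bform_zero_left)
    then show ?thesis using uc by auto
  next
    case True
    then have pa: "bform ua ua > 0" by (rule bform_self_pos)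
    define t where "t = bform uc ua / bform ua ua"
    define u where "u = (\<lambda>j. uc j - t * ua j)"
    have "u \<in> annihilator A"
      using ua(2) uc(2) by (auto simp: annihilator_def coord_space_def u_def dot_diff dot_scale)
    moreover have "bform ua u = 0"
      using pa unfolding u_def bform_diff_right bform_scale_right by (simp add: t_def bform_commute)
    moreover have "rat_vec u" using ua(1) uc(1)
      by (auto simp: u_def t_def rat_vec_def intro!: Rats_diff Rats_mult Rats_divide bform_Rats)
    moreover have "\<forall>w\<in>annihilator (insert a A). bform u w = dot c w"
      using uc(3) unfolding ann_insert by (simp add: u_def bform_diff_left bform_scale_left)
    ultimately show ?thesis unfolding ann_insert by blast
  qed
qed

section \<open>Existence of an optimal direction\<close>

definition dual_cone :: "(nat \<Rightarrow> real) set \<Rightarrow> (nat \<Rightarrow> real) set" where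
  "dual_cone S = {v \<in> coord_space r. \<forall>a\<in>S. dot a v \<ge> 0}"

definition slope :: "(nat \<Rightarrow> real) \<Rightarrow> (nat \<Rightarrow> real) \<Rightarrow> real" where
  "slope chi v = dot chi v / bnorm v"

text \<open>Minus the \<open>B\<close>-orthogonal projection of the vector representing \<open>chi\<close> onto the
  annihilator of \<open>A\<close>.\<close>

definition descent_dir :: "(nat \<Rightarrow> real) \<Rightarrow> (nat \<Rightarrow> real) set \<Rightarrow> nat \<Rightarrow> real" where
  "descent_dir chi A = (\<lambda>j. - (SOME u. rat_vec u \<and> u \<in> annihilator A \<and>
     (\<forall>w\<in>annihilator A. bform u w = dot chi w)) j)"

lemma descent_dir_props:
  assumes "finite A" "\<forall>a\<in>A. rat_vec a" "rat_vec chi"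
  shows "rat_vec (descent_dir chi A)" "descent_dir chi A \<in> annihilator A"
    "\<forall>w\<in>annihilator A. dot chi w = - bform (descent_dir chi A) w"
proof -
  let ?P = "\<lambda>u. rat_vec u \<and> u \<in> annihilator A \<and> (\<forall>w\<in>annihilator A. bform u w = dot chi w)"
  have P: "?P (SOME u. ?P u)"
    using rat_representer_annihilator[OF assms] by (rule someI_ex)
  have "descent_dir chi A = (\<lambda>j. - (SOME u. ?P u) j)" by (simp add: descent_dir_def)
  then show "rat_vec (descent_dir chi A)" "descent_dir chi A \<in> annihilator A"
    "\<forall>w\<in>annihilator A. dot chi w = - bform (descent_dir chi A) w"
    using P by (auto simp: rat_vec_def annihilator_def coord_space_def dot_minus bform_minus_left)
qed

lemma slope_neg_iff: "slope chi v < 0 \<longleftrightarrow> dot chi v < 0"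
proof
  assume "dot chi v < 0"
  then show "slope chi v < 0"
    using bnorm_pos_if_dot_neg[of chi v] by (simp add: slope_def divide_neg_pos)
next
  assume "slope chi v < 0"
  then show "dot chi v < 0"
    using bnorm_nonneg[of v] by (auto simp: slope_def divide_less_0_iff)
qed

lemma slope_scale: "c > 0 \<Longrightarrow> slope chi (\<lambda>j. c * v j) = slope chi v"
  by (simp add: slope_def dot_scale bnorm_scale)

lemma dual_cone_scale: "c > 0 \<Longrightarrow> v \<in> dual_cone S \<Longrightarrow> (\<lambda>j. c * v j) \<in> dual_cone S"
  by (auto simp: dual_cone_def coord_space_def dot_scale)

lemma dual_cone_add: "u \<in> dual_cone S \<Longrightarrow> v \<in> dual_cone S \<Longrightarrow> (\<lambda>j. u j + v j) \<in> dual_cone S"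
  by (auto simp: dual_cone_def coord_space_def dot_add)

lemma descent_dir_slope_le:
  assumes "finite A" "\<forall>a\<in>A. rat_vec a" "rat_vec chi"
    and v: "v \<in> annihilator A" "dot chi v < 0"
  shows "dot chi (descent_dir chi A) < 0" "slope chi (descent_dir chi A) \<le> slope chi v"
proof -
  define p where "p = descent_dir chi A"
  have pA: "p \<in> annihilator A" and dot_chi: "\<forall>w\<in>annihilator A. dot chi w = - bform p w"
    using descent_dir_props[OF assms(1-3)] by (simp_all add: p_def)
  have "- (bnorm p * bnorm v) \<le> dot chi v"
    using dot_chi v(1) bform_cauchy_schwarz[of p v] by simp
  then have "- bnorm p \<le> slope chi v"
    using bnorm_pos_if_dot_neg[OF v(2)] by (simp add: slope_def pos_le_divide_eq)
  moreover have "bnorm p > 0"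
    using \<open>- (bnorm p * bnorm v) \<le> dot chi v\<close> v(2) bnorm_nonneg[of p] bnorm_nonneg[of v]
    by (auto simp: le_less)
  moreover have "dot chi p = - (bnorm p)\<^sup>2" using dot_chi pA by (simp add: bnorm_sq)
  ultimately show "dot chi p < 0" "slope chi p \<le> slope chi v"
    by (simp_all add: slope_def power2_eq_square)
qed

lemma slope_convex_comb_le:
  assumes "dot chi u < 0" "dot chi v < 0" "0 \<le> t" "t \<le> 1"
  defines "w \<equiv> \<lambda>j. (1 - t) * u j + t * v j"
  shows "dot chi w < 0" "slope chi w \<le> max (slope chi u) (slope chi v)"
proof -
  have dot_w: "dot chi w = (1 - t) * dot chi u + t * dot chi v"
    by (simp add: w_def dot_add dot_scale)
  show neg: "dot chi w < 0"
  proof (cases "t = 0")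
    case True
    then show ?thesis using assms(1) by (simp add: dot_w)
  next
    case False
    then have "t * dot chi v < 0" using assms(2,3) by (simp add: mult_pos_neg)
    moreover have "(1 - t) * dot chi u \<le> 0" using assms(1,4) by (simp add: mult_nonneg_nonpos)
    ultimately show ?thesis by (simp add: dot_w)
  qed
  define \<mu> where "\<mu> = max (slope chi u) (slope chi v)"
  have "\<mu> < 0" using assms(1,2) by (simp add: \<mu>_def slope_neg_iff)
  have "slope chi u \<le> \<mu>" "slope chi v \<le> \<mu>" by (simp_all add: \<mu>_def)
  then have "dot chi u \<le> \<mu> * bnorm u" "dot chi v \<le> \<mu> * bnorm v"
    using bnorm_pos_if_dot_neg[OF assms(1)] bnorm_pos_if_dot_neg[OF assms(2)]
    by (simp_all add: slope_def pos_divide_le_eq mult.commute)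
  then have "dot chi w \<le> (1 - t) * (\<mu> * bnorm u) + t * (\<mu> * bnorm v)"
    unfolding dot_w using assms(3,4) by (intro add_mono mult_left_mono) auto
  also have "\<dots> = \<mu> * ((1 - t) * bnorm u + t * bnorm v)" by (simp add: algebra_simps)
  also have "\<dots> \<le> \<mu> * bnorm w"
    using bnorm_convex_comb[OF assms(3,4)] \<open>\<mu> < 0\<close> unfolding w_def
    by (intro mult_left_mono_neg) auto
  finally show "slope chi w \<le> \<mu>"
    using bnorm_pos_if_dot_neg[OF neg] by (simp add: slope_def pos_divide_le_eq mult.commute)
qed

text \<open>Walking from \<open>v\<close> towards \<open>p\<close> until the first constraint becomes tight.\<close>

lemma move_to_smaller_face:
  assumes "finite S" and v: "v \<in> dual_cone S" and p: "p \<in> coord_space r" "p \<notin> dual_cone S"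
    and tight: "\<forall>a\<in>S. dot a v = 0 \<longrightarrow> dot a p = 0"
  obtains t where "0 < t" "t < 1" "(\<lambda>j. (1 - t) * v j + t * p j) \<in> dual_cone S"
    "{a\<in>S. 0 < dot a (\<lambda>j. (1 - t) * v j + t * p j)} \<subset> {a\<in>S. 0 < dot a v}"
proof -
  define T where "T = {a\<in>S. dot a p < 0}"
  have v_nonneg: "a \<in> S \<Longrightarrow> dot a v \<ge> 0" for a using v by (simp add: dual_cone_def)
  have "finite T" using \<open>finite S\<close> by (simp add: T_def)
  moreover have "T \<noteq> {}" using p by (auto simp: dual_cone_def T_def not_le)
  moreover have T_pos: "\<forall>a\<in>T. 0 < dot a v \<and> dot a p < 0"
    unfolding T_def using v_nonneg tight by (fastforce simp: le_less)
  ultimately obtain t a0 where t: "0 < t" "t < 1" and "a0 \<in> T"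
    and a0: "(1 - t) * dot a0 v + t * dot a0 p = 0"
    and T_nonneg: "\<forall>a\<in>T. 0 \<le> (1 - t) * dot a v + t * dot a p"
    by (rule first_zero_crossing)
  define v' where "v' = (\<lambda>j. (1 - t) * v j + t * p j)"
  have dot_v': "dot a v' = (1 - t) * dot a v + t * dot a p" for a
    by (simp add: v'_def dot_add dot_scale)
  have "dot a v' \<ge> 0" if "a \<in> S" for a
  proof (cases "a \<in> T")
    case True
    then show ?thesis using T_nonneg by (simp add: dot_v')
  next
    case False
    then have "dot a p \<ge> 0" using that by (simp add: T_def)
    then show ?thesis using t v_nonneg[OF that] by (simp add: dot_v')
  qed
  then have cone: "v' \<in> dual_cone S" using v p(1) by (simp add: dual_cone_def coord_space_def v'_def)
  have "{a\<in>S. 0 < dot a v'} \<subseteq> {a\<in>S. 0 < dot a v}"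
  proof safe
    fix a assume "a \<in> S" "0 < dot a v'"
    then show "0 < dot a v" using tight v_nonneg[OF \<open>a \<in> S\<close>] by (auto simp: dot_v' le_less)
  qed
  moreover have "a0 \<in> S" using \<open>a0 \<in> T\<close> unfolding T_def by blast
  then have "a0 \<in> {a\<in>S. 0 < dot a v}" using T_pos \<open>a0 \<in> T\<close> by blast
  moreover have "dot a0 v' = 0" using a0 by (simp only: dot_v')
  then have "a0 \<notin> {a\<in>S. 0 < dot a v'}" by simp
  ultimately have "{a\<in>S. 0 < dot a v'} \<subset> {a\<in>S. 0 < dot a v}" by (intro psubsetI) blast+
  with cone show ?thesis unfolding v'_def by (rule that[OF t])
qed

lemma descent_dir_improves:
  assumes "finite S" "\<forall>a\<in>S. rat_vec a" "rat_vec chi"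
  shows "v \<in> dual_cone S \<Longrightarrow> dot chi v < 0 \<Longrightarrow> \<exists>A\<subseteq>S. descent_dir chi A \<in> dual_cone S \<and>
    dot chi (descent_dir chi A) < 0 \<and> slope chi (descent_dir chi A) \<le> slope chi v"
proof (induction "card {a\<in>S. 0 < dot a v}" arbitrary: v rule: less_induct)
  case less
  define A where "A = {a\<in>S. dot a v = 0}"
  define p where "p = descent_dir chi A"
  have "A \<subseteq> S" by (auto simp: A_def)
  then have A: "finite A" "\<forall>a\<in>A. rat_vec a" using assms(1,2) finite_subset by auto
  have "v \<in> annihilator A" using less.prems(1) by (auto simp: annihilator_def dual_cone_def A_def)
  from descent_dir_slope_le[OF A assms(3) this less.prems(2)]
  have p_neg: "dot chi p < 0" and p_slope: "slope chi p \<le> slope chi v" by (simp_all add: p_def)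
  show ?case
  proof (cases "p \<in> dual_cone S")
    case True
    then show ?thesis using \<open>A \<subseteq> S\<close> p_neg p_slope by (auto simp: p_def)
  next
    case False
    have "p \<in> annihilator A" using descent_dir_props(2)[OF A assms(3)] by (simp add: p_def)
    then have "p \<in> coord_space r" "\<forall>a\<in>S. dot a v = 0 \<longrightarrow> dot a p = 0"
      by (auto simp: annihilator_def A_def)
    with move_to_smaller_face[OF assms(1) less.prems(1) _ False] obtain t where
      t: "0 < t" "t < 1" and v': "(\<lambda>j. (1 - t) * v j + t * p j) \<in> dual_cone S"
      and "{a\<in>S. 0 < dot a (\<lambda>j. (1 - t) * v j + t * p j)} \<subset> {a\<in>S. 0 < dot a v}"
      by blast
    then have card: "card {a\<in>S. 0 < dot a (\<lambda>j. (1 - t) * v j + t * p j)} < card {a\<in>S. 0 < dot a v}"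
      using assms(1) by (intro psubset_card_mono) auto
    have "max (slope chi v) (slope chi p) = slope chi v" using p_slope by simp
    then have "dot chi (\<lambda>j. (1 - t) * v j + t * p j) < 0"
      "slope chi (\<lambda>j. (1 - t) * v j + t * p j) \<le> slope chi v"
      using slope_convex_comb_le[OF less.prems(2) p_neg, of t] t by simp_all
    with less.hyps[OF card v'] show ?thesis by (meson order_trans)
  qed
qed

lemma rat_optimal_direction:
  assumes fin: "finite S" and S: "\<forall>a\<in>S. rat_vec a" and chi: "rat_vec chi"
    and v0: "v0 \<in> dual_cone S" "dot chi v0 < 0"
  obtains p where "rat_vec p" "p \<in> dual_cone S" "dot chi p < 0"
    "\<And>v. v \<in> dual_cone S \<Longrightarrow> \<exists>j<r. v j \<noteq> 0 \<Longrightarrow> slope chi p \<le> slope chi v"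
proof -
  define C where "C = {A. A \<subseteq> S \<and> descent_dir chi A \<in> dual_cone S \<and> dot chi (descent_dir chi A) < 0}"
  have "finite C" using fin by (auto simp: C_def intro: finite_subset[of _ "Pow S"])
  moreover have "C \<noteq> {}" using descent_dir_improves[OF assms] by (auto simp: C_def)
  ultimately obtain A0 where A0: "A0 \<in> C"
    and A0_min: "\<And>A. A \<in> C \<Longrightarrow> slope chi (descent_dir chi A0) \<le> slope chi (descent_dir chi A)"
    using arg_min_if_finite[of C "\<lambda>A. slope chi (descent_dir chi A)"] by (meson not_less)
  define p where "p = descent_dir chi A0"
  have "finite A0" using A0 fin by (auto simp: C_def intro: finite_subset)
  then have "rat_vec p" using descent_dir_props(1)[OF _ _ chi] S A0 by (auto simp: p_def C_def)
  moreover have p: "p \<in> dual_cone S" "dot chi p < 0" using A0 by (auto simp: C_def p_def)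
  moreover have "slope chi p \<le> slope chi v" if v: "v \<in> dual_cone S" "\<exists>j<r. v j \<noteq> 0" for v
  proof (cases "dot chi v < 0")
    case True
    from descent_dir_improves[OF assms(1-3) v(1) True] obtain A where
      "A \<in> C" "slope chi (descent_dir chi A) \<le> slope chi v" by (auto simp: C_def)
    then show ?thesis using A0_min by (fastforce simp: p_def)
  next
    case False
    then have "slope chi v \<ge> 0" using bnorm_pos[OF v(2)] by (simp add: slope_def)
    then show ?thesis using slope_neg_iff[THEN iffD2, OF p(2)] by simp
  qed
  ultimately show ?thesis using that by blast
qed

end

section \<open>Indivisible integral directions\<close>

lemma common_denominator:
  fixes p :: "nat \<Rightarrow> real"
  assumes "rat_vec p"
  shows "\<exists>N::int. N > 0 \<and> (\<forall>j<k. real_of_int N * p j \<in> \<int>)"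
proof (induction k)
  case 0
  then show ?case by (intro exI[of _ 1]) auto
next
  case (Suc k)
  then obtain N :: int where N: "N > 0" "\<forall>j<k. real_of_int N * p j \<in> \<int>" by auto
  from assms have "p k \<in> \<rat>" by (simp add: rat_vec_def)
  then obtain a b :: int where ab: "b > 0" "p k = of_int a / of_int b"
    by (auto elim: Rats_cases')
  have "real_of_int (N * b) * p j \<in> \<int>" if "j < Suc k" for j
  proof (cases "j < k")
    case True
    have "real_of_int (N * b) * p j = of_int b * (of_int N * p j)" by simp
    also have "\<dots> \<in> \<int>" by (rule Ints_mult[OF Ints_of_int]) (use N(2) True in auto)
    finally show ?thesis .
  next
    case False
    then have "j = k" using \<open>j < Suc k\<close> by simp
    then have "real_of_int (N * b) * p j = of_int (N * a)" using ab by simp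
    then show ?thesis by (metis Ints_of_int)
  qed
  then show ?case using N(1) ab(1) by (intro exI[of _ "N * b"]) simp
qed

lemma indivisible_dvd_all_imp_1:
  assumes "indivisible r l" "(d::int) > 0" "\<forall>k. d dvd l k"
  shows "d = 1"
proof (rule ccontr)
  assume "d \<noteq> 1"
  then have "d \<ge> 2" using assms(2) by simp
  moreover have "l = (\<lambda>j. d * (l j div d))" using assms(3) by auto
  moreover have "(\<lambda>k. l k div d) \<in> Gam r" using assms(1) by (auto simp: indivisible_def Gam_def)
  ultimately show False using assms(1) by (auto simp: indivisible_def)
qed

lemma indivisible_eq_if_int_multiples:
  assumes l1: "indivisible r l1" and l2: "indivisible r l2"
    and "(a::int) > 0" "(b::int) > 0" and eq: "\<forall>k. a * l1 k = b * l2 k"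
  shows "l1 = l2"
proof -
  define g where "g = gcd a b"
  define a' where "a' = a div g"
  define b' where "b' = b div g"
  have "g > 0" using \<open>a > 0\<close> by (simp add: g_def)
  have ab: "a = g * a'" "b = g * b'" by (simp_all add: a'_def b'_def g_def)
  have cop: "coprime a' b'" using \<open>a > 0\<close> by (simp add: a'_def b'_def g_def div_gcd_coprime)
  have "a' > 0" "b' > 0" using \<open>a > 0\<close> \<open>b > 0\<close> \<open>g > 0\<close> ab by (simp_all add: zero_less_mult_iff)
  have eq': "a' * l1 k = b' * l2 k" for k using eq \<open>g > 0\<close> ab by (simp add: mult.assoc)
  have "b' dvd l1 k" for k
  proof -
    have "b' dvd a' * l1 k" using eq' by simp
    then show ?thesis using cop by (simp add: coprime_commute coprime_dvd_mult_right_iff)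
  qed
  then have "b' = 1" using indivisible_dvd_all_imp_1[OF l1 \<open>b' > 0\<close>] by auto
  have "a' dvd l2 k" for k
  proof -
    have "a' dvd b' * l2 k" using eq'[of k, symmetric] by simp
    then show ?thesis using cop by (simp add: coprime_dvd_mult_right_iff)
  qed
  then have "a' = 1" using indivisible_dvd_all_imp_1[OF l2 \<open>a' > 0\<close>] by auto
  show ?thesis using eq' \<open>a' = 1\<close> \<open>b' = 1\<close> by auto
qed

lemma indivisible_eq_if_real_multiples:
  assumes l1: "indivisible r l1" and l2: "indivisible r l2"
    and c: "(c1::real) > 0" "(c2::real) > 0"
    and eq: "\<forall>k. c1 * of_int (l1 k) = c2 * of_int (l2 k)"
  shows "l1 = l2"
proof -
  obtain j0 where j0: "l1 j0 \<noteq> 0" using l1 by (auto simp: indivisible_def fun_eq_iff)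
  have key: "l2 j0 * l1 k = l1 j0 * l2 k" for k
  proof -
    have "c1 * c2 * of_int (l2 j0 * l1 k) = (c2 * of_int (l2 j0)) * (c1 * of_int (l1 k))"
      by (simp add: algebra_simps)
    also have "\<dots> = (c1 * of_int (l1 j0)) * (c2 * of_int (l2 k))" using eq by simp
    also have "\<dots> = c1 * c2 * of_int (l1 j0 * l2 k)" by (simp add: algebra_simps)
    finally show ?thesis using c by simp (metis of_int_eq_iff of_int_mult)
  qed
  have "0 < l1 j0 \<longleftrightarrow> 0 < c1 * of_int (l1 j0)" "0 < l2 j0 \<longleftrightarrow> 0 < c2 * of_int (l2 j0)"
    using c by (simp_all add: zero_less_mult_iff)
  then have sign: "0 < l1 j0 \<longleftrightarrow> 0 < l2 j0" using eq by simp
  show ?thesis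
  proof (cases "l1 j0 > 0")
    case True
    show ?thesis
      by (rule indivisible_eq_if_int_multiples[OF l1 l2, of "l2 j0" "l1 j0"]) (use key sign True in auto)
  next
    case False
    moreover have "l2 j0 \<noteq> 0" using eq[rule_format, of j0] c j0 by auto
    ultimately have "0 < - l2 j0" "0 < - l1 j0" using j0 sign by auto
    show ?thesis
      by (rule indivisible_eq_if_int_multiples[OF l1 l2, of "- l2 j0" "- l1 j0"]) (use key \<open>0 < - l2 j0\<close> \<open>0 < - l1 j0\<close> in auto)
  qed
qed

lemma indivisible_primitive_part:
  assumes "m \<in> Gam r" "m \<noteq> (\<lambda>_. 0)"
  obtains g l where "g > 0" "indivisible r l" "\<forall>j. m j = g * l j"
proof -
  define g where "g = Gcd (m ` {..<r})"
  have g_dvd: "g dvd m j" for j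
    using assms(1) by (cases "j < r") (auto simp: g_def Gam_def)
  obtain j0 where "m j0 \<noteq> 0" using assms(2) by (auto simp: fun_eq_iff)
  moreover have "j0 < r"
    by (rule ccontr) (use assms(1) \<open>m j0 \<noteq> 0\<close> in \<open>auto simp: Gam_def\<close>)
  ultimately have "g \<noteq> 0" by (auto simp: g_def)
  moreover have "g \<ge> 0" by (simp add: g_def)
  ultimately have "g > 0" by simp
  define l where "l j = m j div g" for j
  have m_eq: "m j = g * l j" for j using g_dvd by (simp add: l_def)
  have "indivisible r l"
    unfolding indivisible_def
  proof (intro conjI notI)
    show "l \<in> Gam r" using assms(1) by (simp add: Gam_def l_def)
    show "l = (\<lambda>_. 0) \<Longrightarrow> False" using assms(2) m_eq by auto
    assume "\<exists>k::int. k \<ge> 2 \<and> (\<exists>m\<in>Gam r. l = (\<lambda>j. k * m j))"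
    then obtain k m' where k: "k \<ge> 2" "l = (\<lambda>j. k * m' j)" by auto
    have "g * k dvd m j" for j using m_eq k(2) by simp
    then have "g * k dvd g" unfolding g_def by (intro Gcd_greatest) auto
    then have "g * k dvd g * 1" by simp
    then have "k dvd 1" using \<open>g > 0\<close> by (simp only: dvd_mult_cancel_left) simp
    then show False using k(1) by simp
  qed
  with \<open>g > 0\<close> m_eq show ?thesis using that by blast
qed

lemma rat_vec_indivisible_multiple:
  assumes "rat_vec p" "p \<in> coord_space r" "\<exists>j<r. p j \<noteq> 0"
  obtains l c where "indivisible r l" "c > 0" "real_vec l = (\<lambda>j. c * p j)"
proof -
  obtain N :: int where N: "N > 0" "\<forall>j<r. real_of_int N * p j \<in> \<int>"
    using common_denominator[OF assms(1)] by blast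
  define m where "m j = \<lfloor>real_of_int N * p j\<rfloor>" for j
  have m_eq: "real_of_int (m j) = real_of_int N * p j" for j
    using N(2) assms(2) by (cases "j < r") (auto simp: m_def coord_space_def elim!: Ints_cases)
  have "m \<in> Gam r" using assms(2) by (simp add: Gam_def m_def coord_space_def)
  obtain j0 where "j0 < r" "p j0 \<noteq> 0" using assms(3) by blast
  then have "m j0 \<noteq> 0" using m_eq[of j0] N(1) by auto
  then have "m \<noteq> (\<lambda>_. 0)" by auto
  obtain g l where gl: "g > 0" "indivisible r l" "\<forall>j. m j = g * l j"
    by (rule indivisible_primitive_part[OF \<open>m \<in> Gam r\<close> \<open>m \<noteq> (\<lambda>_. 0)\<close>])
  have l: "real_vec l = (\<lambda>j. real_of_int N / real_of_int g * p j)"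
    using gl(1) m_eq by (auto simp: real_vec_def gl(3) field_simps)
  show ?thesis by (rule that[OF gl(2) _ l]) (simp add: gl(1) N(1))
qed

section \<open>Kempf's theorem\<close>

context pos_def_form
begin

lemma int_optimal_direction:
  assumes "finite S" "\<forall>a\<in>S. rat_vec a" "rat_vec chi" "v0 \<in> dual_cone S" "dot chi v0 < 0"
  obtains l where "indivisible r l" "real_vec l \<in> dual_cone S"
    "\<And>m. m \<in> Gam r \<Longrightarrow> m \<noteq> (\<lambda>_. 0) \<Longrightarrow> real_vec m \<in> dual_cone S \<Longrightarrow>
       slope chi (real_vec l) \<le> slope chi (real_vec m)"
proof -
  obtain p where p: "rat_vec p" "p \<in> dual_cone S" "dot chi p < 0"
    "\<And>v. v \<in> dual_cone S \<Longrightarrow> \<exists>j<r. v j \<noteq> 0 \<Longrightarrow> slope chi p \<le> slope chi v"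
    using rat_optimal_direction[OF assms] by blast
  have "p \<in> coord_space r" using p(2) by (simp add: dual_cone_def)
  moreover have "\<exists>j<r. p j \<noteq> 0" using dot_nonzeroD p(3) by (metis less_irrefl)
  ultimately obtain l c where l: "indivisible r l" "c > 0" "real_vec l = (\<lambda>j. c * p j)"
    using rat_vec_indivisible_multiple p(1) by blast
  show ?thesis
  proof (rule that)
    show "indivisible r l" by (rule l(1))
    show "real_vec l \<in> dual_cone S" unfolding l(3) by (rule dual_cone_scale[OF l(2) p(2)])
    show "slope chi (real_vec l) \<le> slope chi (real_vec m)"
      if "m \<in> Gam r" "m \<noteq> (\<lambda>_. 0)" "real_vec m \<in> dual_cone S" for m
      unfolding l(3) slope_scale[OF l(2)] using p(4) that real_vec_nonzero by blast
  qed
qed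

lemma parallel_if_slope_of_sum_ge:
  assumes "dot chi u < 0" "dot chi v < 0" "slope chi v = slope chi u"
    and "slope chi u \<le> slope chi (\<lambda>j. u j + v j)"
  shows "\<forall>j<r. bnorm v * u j = bnorm u * v j"
proof -
  define \<mu> where "\<mu> = slope chi u"
  have "\<mu> < 0" using assms(1) by (simp add: \<mu>_def slope_neg_iff)
  have nu: "bnorm u > 0" and nv: "bnorm v > 0" using assms(1,2) by (auto intro: bnorm_pos_if_dot_neg)
  then have "dot chi u = \<mu> * bnorm u" "dot chi v = \<mu> * bnorm v"
    using assms(3) unfolding \<mu>_def slope_def by (simp_all add: field_simps)
  then have dot_sum: "dot chi (\<lambda>j. u j + v j) = \<mu> * (bnorm u + bnorm v)"
    by (simp add: dot_add algebra_simps)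
  have "bnorm (\<lambda>j. u j + v j) > 0"
    using assms(1,2) by (intro bnorm_pos_if_dot_neg[of chi]) (simp add: dot_add)
  moreover have "\<mu> \<le> slope chi (\<lambda>j. u j + v j)" using assms(4) by (simp add: \<mu>_def)
  ultimately have "\<mu> * bnorm (\<lambda>j. u j + v j) \<le> \<mu> * (bnorm u + bnorm v)"
    by (simp add: slope_def dot_sum pos_le_divide_eq)
  then have "bnorm u + bnorm v \<le> bnorm (\<lambda>j. u j + v j)"
    using \<open>\<mu> < 0\<close> by (simp add: mult_le_cancel_left_neg)
  then have "bnorm (\<lambda>j. u j + v j) = bnorm u + bnorm v"
    using bnorm_triangle[of u v] by simp
  then show ?thesis by (rule bnorm_triangle_eq_parallel)
qed

lemma int_optimal_direction_unique:
  assumes m0: "m0 \<in> Gam r" "real_vec m0 \<in> dual_cone S" "dot chi (real_vec m0) < 0"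
    and l1: "indivisible r l1" "real_vec l1 \<in> dual_cone S"
    and min1: "\<And>m. m \<in> Gam r \<Longrightarrow> m \<noteq> (\<lambda>_. 0) \<Longrightarrow> real_vec m \<in> dual_cone S \<Longrightarrow>
       slope chi (real_vec l1) \<le> slope chi (real_vec m)"
    and l2: "indivisible r l2" "real_vec l2 \<in> dual_cone S"
    and min2: "\<And>m. m \<in> Gam r \<Longrightarrow> m \<noteq> (\<lambda>_. 0) \<Longrightarrow> real_vec m \<in> dual_cone S \<Longrightarrow>
       slope chi (real_vec l2) \<le> slope chi (real_vec m)"
  shows "l1 = l2"
proof -
  define u1 where "u1 = real_vec l1"
  define u2 where "u2 = real_vec l2"
  have G: "l1 \<in> Gam r" "l1 \<noteq> (\<lambda>_. 0)" "l2 \<in> Gam r" "l2 \<noteq> (\<lambda>_. 0)"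
    using l1 l2 by (auto simp: indivisible_def)
  have "m0 \<noteq> (\<lambda>_. 0)" using m0(3) by (auto simp: dot_def real_vec_def)
  then have "slope chi u1 < 0"
    using min1[OF m0(1) _ m0(2)] m0(3) slope_neg_iff[of chi "real_vec m0"] by (simp add: u1_def)
  then have "dot chi u1 < 0" by (simp add: slope_neg_iff)
  have slope_eq: "slope chi u2 = slope chi u1"
    using min1[OF G(3,4) l2(2)] min2[OF G(1,2) l1(2)] by (simp add: u1_def u2_def)
  then have "slope chi u2 < 0" using \<open>slope chi u1 < 0\<close> by simp
  then have "dot chi u2 < 0" by (simp add: slope_neg_iff)
  define s where "s = (\<lambda>j. l1 j + l2 j)"
  have s_vec: "real_vec s = (\<lambda>j. u1 j + u2 j)" by (simp add: s_def real_vec_def u1_def u2_def)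
  have "s \<in> Gam r" using G by (simp add: Gam_def s_def)
  moreover have "real_vec s \<in> dual_cone S"
    unfolding s_vec u1_def u2_def by (rule dual_cone_add[OF l1(2) l2(2)])
  moreover have "dot chi (real_vec s) < 0"
    using \<open>dot chi u1 < 0\<close> \<open>dot chi u2 < 0\<close> by (simp add: s_vec dot_add)
  then have "s \<noteq> (\<lambda>_. 0)" by (auto simp: dot_def real_vec_def)
  ultimately have "slope chi u1 \<le> slope chi (real_vec s)" using min1 by (simp add: u1_def)
  then have "slope chi u1 \<le> slope chi (\<lambda>j. u1 j + u2 j)" by (simp only: s_vec)
  with \<open>dot chi u1 < 0\<close> \<open>dot chi u2 < 0\<close> slope_eq
  have par: "\<forall>j<r. bnorm u2 * u1 j = bnorm u1 * u2 j" by (rule parallel_if_slope_of_sum_ge)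
  have "bnorm u2 * of_int (l1 k) = bnorm u1 * of_int (l2 k)" for k
    using par G by (cases "k < r") (auto simp: Gam_def u1_def u2_def real_vec_def)
  moreover have "bnorm u1 > 0" "bnorm u2 > 0"
    using \<open>dot chi u1 < 0\<close> \<open>dot chi u2 < 0\<close> by (auto intro: bnorm_pos_if_dot_neg)
  ultimately show ?thesis using indivisible_eq_if_real_multiples[OF l1(1) l2(1)] by blast
qed

end

section \<open>Optimal one-parameter subgroups of points\<close>

definition optimal :: "nat \<Rightarrow> nat \<Rightarrow> (nat \<Rightarrow> nat \<Rightarrow> int) \<Rightarrow> (nat \<Rightarrow> nat \<Rightarrow> int) \<Rightarrow> (nat \<Rightarrow> int)
     \<Rightarrow> (nat \<Rightarrow> complex) \<Rightarrow> (nat \<Rightarrow> int) \<Rightarrow> bool" where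
  "optimal n r B chis chi x l \<longleftrightarrow> indivisible r l \<and> x \<in> Xl n r chis l \<and>
     (\<forall>m\<in>Gam r. m \<noteq> (\<lambda>_. 0) \<and> x \<in> Xl n r chis m \<longrightarrow>
        real_of_int (pair r chi l) / nrm r B l \<le> real_of_int (pair r chi m) / nrm r B m)"

lemma lam_chi_eq_The_optimal: "lam_chi n r B chis chi x = (THE l. optimal n r B chis chi x l)"
  by (simp add: lam_chi_def optimal_def)

lemma optimal_if_support_grows:
  assumes "optimal n r B chis chi x0 l" "x \<in> Xl n r chis l"
    and "\<forall>i\<in>{1..n}. x0 i \<noteq> 0 \<longrightarrow> x i \<noteq> 0"
  shows "optimal n r B chis chi x l"
proof -
  have "x0 \<in> Xl n r chis m" if "x \<in> Xl n r chis m" for m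
    using that assms(3) by (auto simp: Xl_def)
  then show ?thesis using assms(1,2) by (auto simp: optimal_def)
qed

context pos_def_form
begin

lemma dot_real_vec: "dot (real_vec a) (real_vec m) = real_of_int (pair r a m)"
  by (simp add: pair_def dot_def real_vec_def)

lemma nrm_eq_bnorm: "nrm r B m = bnorm (real_vec m)"
  by (simp add: nrm_def bnorm_def bform_def real_vec_def)

definition support_chars :: "nat \<Rightarrow> (nat \<Rightarrow> nat \<Rightarrow> int) \<Rightarrow> (nat \<Rightarrow> complex) \<Rightarrow> (nat \<Rightarrow> real) set" where
  "support_chars n chis x = (\<lambda>i. real_vec (chis i)) ` {i\<in>{1..n}. x i \<noteq> 0}"

lemma Xl_iff_dual_cone:
  "m \<in> Gam r \<Longrightarrow> x \<in> Xl n r chis m \<longleftrightarrow> real_vec m \<in> dual_cone (support_chars n chis x)"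
  by (auto simp: Xl_def dual_cone_def support_chars_def Gam_iff_real_vec dot_real_vec not_less)

lemma optimal_ex1:
  assumes "unstable n r chis chi x"
  shows "\<exists>!l. optimal n r B chis chi x l"
proof -
  from assms obtain m0 where m0: "m0 \<in> Gam r" "x \<in> Xl n r chis m0" "pair r chi m0 < 0"
    by (auto simp: unstable_def)
  let ?S = "support_chars n chis x"
  have S: "finite ?S" "\<forall>a\<in>?S. rat_vec a" by (auto simp: support_chars_def rat_vec_def real_vec_def)
  have chi: "rat_vec (real_vec chi)" by (simp add: rat_vec_def real_vec_def)
  have v0: "real_vec m0 \<in> dual_cone ?S" "dot (real_vec chi) (real_vec m0) < 0"
    using Xl_iff_dual_cone[OF m0(1)] m0(2,3) by (simp_all add: dot_real_vec)
  have optimal_iff: "optimal n r B chis chi x l \<longleftrightarrow> indivisible r l \<and> real_vec l \<in> dual_cone ?S \<and>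
     (\<forall>m\<in>Gam r. m \<noteq> (\<lambda>_. 0) \<and> real_vec m \<in> dual_cone ?S \<longrightarrow>
        slope (real_vec chi) (real_vec l) \<le> slope (real_vec chi) (real_vec m))" for l
  proof -
    have "indivisible r l \<Longrightarrow> l \<in> Gam r" by (simp add: indivisible_def)
    then show ?thesis
      unfolding optimal_def slope_def dot_real_vec nrm_eq_bnorm by (auto simp: Xl_iff_dual_cone)
  qed
  show ?thesis
  proof (rule ex_ex1I)
    obtain l where "indivisible r l" "real_vec l \<in> dual_cone ?S"
      "\<And>m. m \<in> Gam r \<Longrightarrow> m \<noteq> (\<lambda>_. 0) \<Longrightarrow> real_vec m \<in> dual_cone ?S \<Longrightarrow>
         slope (real_vec chi) (real_vec l) \<le> slope (real_vec chi) (real_vec m)"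
      using int_optimal_direction[OF S chi v0] by blast
    then have "optimal n r B chis chi x l" unfolding optimal_iff by blast
    then show "\<exists>l. optimal n r B chis chi x l" by blast
    show "l1 = l2" if "optimal n r B chis chi x l1" "optimal n r B chis chi x l2" for l1 l2
      using that int_optimal_direction_unique[OF m0(1) v0] unfolding optimal_iff by blast
  qed
qed

lemma lam_chi_optimal: "unstable n r chis chi x \<Longrightarrow> optimal n r B chis chi x (lam_chi n r B chis chi x)"
  unfolding lam_chi_eq_The_optimal by (rule theI'[OF optimal_ex1])

lemma lam_chi_eqI: "unstable n r chis chi x \<Longrightarrow> optimal n r B chis chi x l \<Longrightarrow> lam_chi n r B chis chi x = l"
  unfolding lam_chi_eq_The_optimal by (metis optimal_ex1 the1_equality)

lemma optimal_pair_neg: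
  assumes "unstable n r chis chi x" "optimal n r B chis chi x l"
  shows "pair r chi l < 0"
proof -
  from assms(1) obtain m0 where m0: "m0 \<in> Gam r" "x \<in> Xl n r chis m0" "pair r chi m0 < 0"
    by (auto simp: unstable_def)
  then have "m0 \<noteq> (\<lambda>_. 0)" by (auto simp: pair_def)
  then have "nrm r B m0 > 0" using real_vec_nonzero[OF m0(1)] bnorm_pos by (simp add: nrm_eq_bnorm)
  have "real_of_int (pair r chi l) / nrm r B l \<le> real_of_int (pair r chi m0) / nrm r B m0"
    using assms(2) m0 \<open>m0 \<noteq> _\<close> by (simp add: optimal_def)
  also have "\<dots> < 0" using m0(3) \<open>nrm r B m0 > 0\<close> by (simp add: divide_neg_pos)
  finally show ?thesis using bnorm_nonneg[of "real_vec l"] by (auto simp: nrm_eq_bnorm divide_less_0_iff)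
qed

lemma Lset_nonneg_subset_S_chi:
  assumes "l \<in> LamChi n r B chis chi"
  shows "Lset n {i\<in>{1..n}. pair r (chis i) l \<ge> 0} \<subseteq> S_chi n r B chis chi l"
proof
  fix x assume x: "x \<in> Lset n {i\<in>{1..n}. pair r (chis i) l \<ge> 0}"
  from assms obtain x0 where x0: "unstable n r chis chi x0" "l = lam_chi n r B chis chi x0"
    by (auto simp: LamChi_def)
  have opt0: "optimal n r B chis chi x0 l" using lam_chi_optimal[OF x0(1)] x0(2) by simp
  have "x \<in> Xl n r chis l" using x by (auto simp: Xl_def Lset_def)
  moreover have "x0 \<in> Xl n r chis l" using opt0 by (simp add: optimal_def)
  then have "\<forall>i\<in>{1..n}. x0 i \<noteq> 0 \<longrightarrow> x i \<noteq> 0"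
    using x by (auto simp: Xl_def Lset_def not_less)
  ultimately have opt: "optimal n r B chis chi x l" by (rule optimal_if_support_grows[OF opt0])
  have "l \<in> Gam r" using opt0 by (simp add: optimal_def indivisible_def)
  then have "unstable n r chis chi x"
    using \<open>x \<in> Xl n r chis l\<close> optimal_pair_neg[OF x0(1) opt0] by (auto simp: unstable_def)
  then show "x \<in> S_chi n r B chis chi l" using lam_chi_eqI opt by (simp add: S_chi_def)
qed

lemma subset_nonneg_if_Lset_subset_S_chi:
  assumes "M \<subseteq> {1..n}" "Lset n M \<subseteq> S_chi n r B chis chi l"
  shows "M \<subseteq> {i\<in>{1..n}. pair r (chis i) l \<ge> 0}"
proof -
  define x :: "nat \<Rightarrow> complex" where "x = (\<lambda>i. if i \<in> M then 1 else 0)"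
  have "x \<in> Lset n M" by (simp add: x_def Lset_def)
  then have "x \<in> S_chi n r B chis chi l" using assms(2) by auto
  then have "optimal n r B chis chi x l" using lam_chi_optimal by (auto simp: S_chi_def)
  then have "x \<in> Xl n r chis l" by (simp add: optimal_def)
  then show ?thesis using assms(1) by (auto simp: Xl_def x_def not_less)
qed

end

lemma Vset_nonneg_eq_Xl: "Vset ({1..n} - {i\<in>{1..n}. pair r (chis i) l \<ge> 0}) = Xl n r chis l"
  by (auto simp: Vset_def Xl_def not_le)

lemma greatest_is_unique_maximal:
  assumes "M \<subseteq> S" "Q M" and greatest: "\<And>M'. M' \<subseteq> S \<Longrightarrow> Q M' \<Longrightarrow> M' \<subseteq> M"
  shows "\<forall>M'. M' \<subseteq> S \<and> Q M' \<and> M \<subseteq> M' \<longrightarrow> M' = M"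
    and "\<exists>!M. M \<subseteq> S \<and> Q M \<and> (\<forall>M'. M' \<subseteq> S \<and> Q M' \<and> M \<subseteq> M' \<longrightarrow> M' = M)"
proof -
  show maximal: "\<forall>M'. M' \<subseteq> S \<and> Q M' \<and> M \<subseteq> M' \<longrightarrow> M' = M"
    using greatest by (simp add: subset_antisym)
  show "\<exists>!M. M \<subseteq> S \<and> Q M \<and> (\<forall>M'. M' \<subseteq> S \<and> Q M' \<and> M \<subseteq> M' \<longrightarrow> M' = M)"
  proof (rule ex1I[of _ M])
    show "M \<subseteq> S \<and> Q M \<and> (\<forall>M'. M' \<subseteq> S \<and> Q M' \<and> M \<subseteq> M' \<longrightarrow> M' = M)"
      using assms(1,2) maximal by simp
  next
    fix N assume N: "N \<subseteq> S \<and> Q N \<and> (\<forall>M'. M' \<subseteq> S \<and> Q M' \<and> N \<subseteq> M' \<longrightarrow> M' = N)"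
    then have "N \<subseteq> M" using greatest by simp
    moreover have "M \<subseteq> S \<and> Q M \<and> N \<subseteq> M \<longrightarrow> M = N"
      using N by (rule conjunct2[THEN conjunct2, THEN spec])
    ultimately show "N = M" using assms(1,2) by simp
  qed
qed

theorem lemma3p15:
  fixes n r :: nat and B chis :: "nat \<Rightarrow> nat \<Rightarrow> int" and chi l :: "nat \<Rightarrow> int"
  assumes symB: "\<And>j k. B j k = B k j"
    and posB: "\<And>v::nat \<Rightarrow> real. (\<exists>j<r. v j \<noteq> 0) \<Longrightarrow>
                 (\<Sum>j<r. \<Sum>k<r. real_of_int (B j k) * v j * v k) > 0"
    and lam: "l \<in> LamChi n r B chis chi"
  shows "(\<exists>!M. M \<subseteq> {1..n} \<and> Lset n M \<subseteq> S_chi n r B chis chi l \<and>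
            (\<forall>M'. M' \<subseteq> {1..n} \<and> Lset n M' \<subseteq> S_chi n r B chis chi l \<and> M \<subseteq> M' \<longrightarrow> M' = M))
       \<and> (let M = {i\<in>{1..n}. pair r (chis i) l \<ge> 0} in
            Lset n M \<subseteq> S_chi n r B chis chi l \<and>
            (\<forall>M'. M' \<subseteq> {1..n} \<and> Lset n M' \<subseteq> S_chi n r B chis chi l \<and> M \<subseteq> M' \<longrightarrow> M' = M) \<and>
            Vset ({1..n} - M) = Xl n r chis l)"
proof -
  interpret pos_def_form r B using symB posB by unfold_locales auto
  define M where "M = {i\<in>{1..n}. pair r (chis i) l \<ge> 0}"
  have M_sub: "M \<subseteq> {1..n}" by (auto simp: M_def)
  have M_S_chi: "Lset n M \<subseteq> S_chi n r B chis chi l"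
    unfolding M_def by (rule Lset_nonneg_subset_S_chi[OF lam])
  have greatest: "M' \<subseteq> M" if "M' \<subseteq> {1..n}" "Lset n M' \<subseteq> S_chi n r B chis chi l" for M'
    unfolding M_def by (rule subset_nonneg_if_Lset_subset_S_chi[OF that])
  note maximal = greatest_is_unique_maximal[where Q = "\<lambda>M. Lset n M \<subseteq> S_chi n r B chis chi l",
      OF M_sub M_S_chi greatest]
  have "Vset ({1..n} - M) = Xl n r chis l"
    unfolding M_def by (rule Vset_nonneg_eq_Xl)
  with maximal M_S_chi show ?thesis
    unfolding Let_def M_def[symmetric] by (intro conjI)
qed

end
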